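(* For the binary tree-shifts $X_4=(A,D)$ and $X_6=(A,F)$, the limit $h_{PS}$ exists and $$h_{PS}(X_4)=h_{PS}(X_6)=\sum_{n=2}^\infty\frac{1}{2^n}\log\operatorname{Fib}(n+1),$$ where $(\operatorname{Fib}(m))_{m\ge1}=(1,1,2,3,5,8,\dots)$ is the Fibonacci sequence. Moreover, for $X_4$ one has for all $n\ge3$: $p(n)=\operatorname{Fib}(n+3)\operatorname{Fib}(n+2)\prod_{\ell=3}^{n+1}\operatorname{Fib}(\ell)^{2^{n+2-\ell}}$.
   Context: Binary tree-shifts: $k=2$, directions $a_1,a_2$, alphabet $\{0,1\}$; $(P,Q)$ is the set of trees $t:\{a_1,a_2\}^*\to\{0,1\}$ with $P_{t_x,t_{xa_1}}=1$, $Q_{t_x,t_{xa_2}}=1$ for all nodes $x$. Matrices: $A=\begin{pmatrix}1&1\\1&1\end{pmatrix}$, $D=\begin{pmatrix}1&1\\1&0\end{pmatrix}$, $F=\begin{pmatrix}0&1\\1&1\end{pmatrix}$. $p(n)$ is the number of allowed blocks of length $n$ (labellings $t|_{\Delta_n}$, $\Delta_n$ the words of length $\le n$), and $h_{PS}=\lim_{n\to\infty}\frac{\log p(n)}{1+2+\cdots+2^n}$. *)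

theory Defs
  imports Complex_Main "HOL-Number_Theory.Fib"
begin

text \<open>Nodes of the binary tree are words over the directions a1, a2,
  encoded as bool lists (False = a1, True = a2).
  A 2x2 0/1 matrix is a function nat => nat => nat on indices 0,1.\<close>

type_synonym mat01 = "nat \<Rightarrow> nat \<Rightarrow> nat"

definition mat2 :: "nat \<Rightarrow> nat \<Rightarrow> nat \<Rightarrow> nat \<Rightarrow> mat01" where
  "mat2 a b c d = (\<lambda>i j. if i = 0 then (if j = 0 then a else b) else (if j = 0 then c else d))"

definition matA :: mat01 where "matA = mat2 1 1 1 1"
definition matD :: mat01 where "matD = mat2 1 1 1 0"
definition matF :: mat01 where "matF = mat2 0 1 1 1"

definition tree_shift :: "mat01 \<Rightarrow> mat01 \<Rightarrow> (bool list \<Rightarrow> nat) set" where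
  "tree_shift P Q = {t. (\<forall>x. t x \<in> {0,1}) \<and>
      (\<forall>x. P (t x) (t (x @ [False])) = 1 \<and> Q (t x) (t (x @ [True])) = 1)}"

text \<open>Restriction of a tree to Delta_n (words of length at most n), extended by 0.\<close>
definition block_of :: "nat \<Rightarrow> (bool list \<Rightarrow> nat) \<Rightarrow> (bool list \<Rightarrow> nat)" where
  "block_of n t = (\<lambda>w. if length w \<le> n then t w else 0)"

definition pcount :: "mat01 \<Rightarrow> mat01 \<Rightarrow> nat \<Rightarrow> nat" where
  "pcount P Q n = card (block_of n ` tree_shift P Q)"

definition hPS_seq :: "mat01 \<Rightarrow> mat01 \<Rightarrow> nat \<Rightarrow> real" where
  "hPS_seq P Q n = ln (real (pcount P Q n)) / (\<Sum>i\<le>n. 2 ^ i)"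

end

theory Submission
  imports Defs
begin

text \<open>Since A allows everything, a block of (A,Q) is just a 0/1 labelling of Delta_n whose
  a2-edges satisfy Q, and every such block extends to a tree. Splitting a block at the root into
  its two subtrees, the number V(n) of blocks and the number a(n) of blocks whose root carries the
  unconstrained symbol satisfy a(n+1) = V(n)^2 and V(n+1) = V(n) (V(n) + a(n)), for D and F alike.
  The ratio V(n) / a(n) is Fib(n+3) / Fib(n+2), which turns this into
  V(n+1) Fib(n+3) = Fib(n+4) V(n)^2 and so gives the product formula; taking logarithms,
  ln V(n) / 2^(n+1) is a partial sum of the series plus a vanishing error.\<close>

definition right_blocks :: "mat01 \<Rightarrow> nat \<Rightarrow> (bool list \<Rightarrow> nat) set" where
  "right_blocks Q n = {b. (\<forall>w. n < length w \<longrightarrow> b w = 0) \<and> (\<forall>w. b w \<in> {0,1}) \<and>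
     (\<forall>x. length x < n \<longrightarrow> Q (b x) (b (x @ [True])) = 1)}"

definition rooted_blocks :: "mat01 \<Rightarrow> nat \<Rightarrow> nat \<Rightarrow> (bool list \<Rightarrow> nat) set" where
  "rooted_blocks Q n s = {b \<in> right_blocks Q n. b [] = s}"

text \<open>A block extends to a tree by labelling everything outside Delta_n with \<open>c\<close>,
  which may follow every symbol.\<close>

lemma blocks_matA_eq_right_blocks:
  assumes c: "c \<in> {0,1}" and Qc: "Q 0 c = 1" "Q 1 c = 1"
  shows "block_of n ` tree_shift matA Q = right_blocks Q n"
proof
  show "block_of n ` tree_shift matA Q \<subseteq> right_blocks Q n"
    by (force simp: tree_shift_def right_blocks_def block_of_def)
  show "right_blocks Q n \<subseteq> block_of n ` tree_shift matA Q"
  proof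
    fix b assume b: "b \<in> right_blocks Q n"
    define t where "t = (\<lambda>w. if length w \<le> n then b w else c)"
    have val: "t w \<in> {0,1}" for w
      using b c by (auto simp: t_def right_blocks_def)
    have "Q (t x) (t (x @ [True])) = 1" for x
    proof (cases "length x < n")
      case True
      then show ?thesis using b by (simp add: t_def right_blocks_def)
    next
      case False
      then show ?thesis using val[of x] Qc by (auto simp: t_def)
    qed
    then have "t \<in> tree_shift matA Q"
      using b c by (auto simp: tree_shift_def t_def right_blocks_def matA_def mat2_def)
    moreover have "block_of n t = b"
      using b by (auto simp: block_of_def t_def right_blocks_def)
    ultimately show "b \<in> block_of n ` tree_shift matA Q" by blast
  qed
qed

lemma finite_right_blocks: "finite (right_blocks Q n)"
proof (rule finite_subset)
  show "right_blocks Q n \<subseteq> {b. \<forall>w. (w \<in> {w. set w \<subseteq> UNIV \<and> length w \<le> n} \<longrightarrow> b w \<in> {0,1})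
      \<and> (w \<notin> {w. set w \<subseteq> UNIV \<and> length w \<le> n} \<longrightarrow> b w = 0)}" (is "_ \<subseteq> ?F")
    by (auto simp: right_blocks_def)
  show "finite ?F"
    by (intro finite_set_of_finite_funs finite_lists_length_le) auto
qed

definition tree_node :: "nat \<Rightarrow> (bool list \<Rightarrow> nat) \<Rightarrow> (bool list \<Rightarrow> nat) \<Rightarrow> bool list \<Rightarrow> nat" where
  "tree_node s L R = (\<lambda>w. case w of [] \<Rightarrow> s | d # w' \<Rightarrow> if d then R w' else L w')"

lemma tree_node_simps [simp]:
  "tree_node s L R [] = s" "tree_node s L R (False # w) = L w" "tree_node s L R (True # w) = R w"
  by (simp_all add: tree_node_def)

lemma tree_node_subtrees: "tree_node (b []) (\<lambda>w. b (False # w)) (\<lambda>w. b (True # w)) = b"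
proof
  show "tree_node (b []) (\<lambda>w. b (False # w)) (\<lambda>w. b (True # w)) w = b w" for w
    by (cases w) (auto simp: tree_node_def)
qed

lemma tree_node_eq_iff: "tree_node s L R = tree_node s' L' R' \<longleftrightarrow> s = s' \<and> L = L' \<and> R = R'"
proof
  assume "tree_node s L R = tree_node s' L' R'"
  then have "tree_node s L R w = tree_node s' L' R' w" for w
    by simp
  from this[of "[]"] this[of "False # w" for w] this[of "True # w" for w]
  show "s = s' \<and> L = L' \<and> R = R'"
    by (simp add: fun_eq_iff)
qed simp

lemma all_bool_list_iff: "(\<forall>w. P w) \<longleftrightarrow> P [] \<and> (\<forall>w. P (False # w)) \<and> (\<forall>w. P (True # w))"
proof (intro iffI allI)
  fix w
  assume "P [] \<and> (\<forall>w. P (False # w)) \<and> (\<forall>w. P (True # w))"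
  then show "P w"
    by (cases w; cases "hd w") auto
qed simp

lemma tree_node_in_right_blocks_iff:
  "tree_node s L R \<in> right_blocks Q (Suc m) \<longleftrightarrow>
     s \<in> {0,1} \<and> L \<in> right_blocks Q m \<and> R \<in> right_blocks Q m \<and> Q s (R []) = 1"
proof -
  have supp: "(\<forall>w. Suc m < length w \<longrightarrow> tree_node s L R w = 0) \<longleftrightarrow>
      (\<forall>w. m < length w \<longrightarrow> L w = 0) \<and> (\<forall>w. m < length w \<longrightarrow> R w = 0)"
    by (subst all_bool_list_iff) simp
  have vals: "(\<forall>w. tree_node s L R w \<in> {0,1}) \<longleftrightarrow>
      s \<in> {0,1} \<and> (\<forall>w. L w \<in> {0,1}) \<and> (\<forall>w. R w \<in> {0,1})"
    by (subst all_bool_list_iff) simp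
  have edges: "(\<forall>x. length x < Suc m \<longrightarrow> Q (tree_node s L R x) (tree_node s L R (x @ [True])) = 1) \<longleftrightarrow>
      Q s (R []) = 1 \<and> (\<forall>x. length x < m \<longrightarrow> Q (L x) (L (x @ [True])) = 1)
        \<and> (\<forall>x. length x < m \<longrightarrow> Q (R x) (R (x @ [True])) = 1)"
    by (subst all_bool_list_iff) simp
  show ?thesis
    unfolding right_blocks_def mem_Collect_eq supp vals edges by blast
qed

lemma rooted_blocks_Suc:
  assumes "s \<in> {0,1}"
  shows "rooted_blocks Q (Suc m) s =
    (\<lambda>(L, R). tree_node s L R) ` (right_blocks Q m \<times> {R \<in> right_blocks Q m. Q s (R []) = 1})"
proof (intro equalityI subsetI)
  fix b assume b: "b \<in> rooted_blocks Q (Suc m) s"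
  define L R where "L = (\<lambda>w. b (False # w))" and "R = (\<lambda>w. b (True # w))"
  have b_eq: "b = tree_node s L R"
    using b tree_node_subtrees[of b] by (simp add: rooted_blocks_def L_def R_def)
  with b have "(L, R) \<in> right_blocks Q m \<times> {R \<in> right_blocks Q m. Q s (R []) = 1}"
    by (simp add: rooted_blocks_def tree_node_in_right_blocks_iff)
  with b_eq show "b \<in> (\<lambda>(L, R). tree_node s L R) ` (right_blocks Q m \<times> {R \<in> right_blocks Q m. Q s (R []) = 1})"
    by force
qed (use assms in \<open>auto simp: rooted_blocks_def tree_node_in_right_blocks_iff\<close>)

lemma card_rooted_blocks_Suc:
  assumes "s \<in> {0,1}"
  shows "card (rooted_blocks Q (Suc m) s) =
    card (right_blocks Q m) * card {R \<in> right_blocks Q m. Q s (R []) = 1}"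
  unfolding rooted_blocks_Suc[OF assms]
  by (subst card_image) (auto intro: inj_onI simp: tree_node_eq_iff card_cartesian_product)

lemma right_blocks_root: "b \<in> right_blocks Q n \<Longrightarrow> b [] \<in> {0,1}"
  by (simp add: right_blocks_def)

lemma card_right_blocks:
  assumes "s \<in> {0,1}"
  shows "card (right_blocks Q n) = card (rooted_blocks Q n s) + card (rooted_blocks Q n (1 - s))"
proof -
  have "right_blocks Q n = rooted_blocks Q n s \<union> rooted_blocks Q n (1 - s)"
    using assms right_blocks_root by (fastforce simp: rooted_blocks_def)
  moreover have "finite (rooted_blocks Q n t)" for t
    by (simp add: rooted_blocks_def finite_right_blocks)
  moreover have "rooted_blocks Q n s \<inter> rooted_blocks Q n (1 - s) = {}"
    using assms by (auto simp: rooted_blocks_def)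
  ultimately show ?thesis
    by (simp add: card_Un_disjoint)
qed

lemma card_rooted_blocks_0:
  assumes "s \<in> {0,1}"
  shows "card (rooted_blocks Q 0 s) = 1"
proof -
  have "rooted_blocks Q 0 s = {\<lambda>w. if w = [] then s else 0}"
    using assms by (auto simp: rooted_blocks_def right_blocks_def)
  then show ?thesis by simp
qed

text \<open>Up to relabelling, Q is the golden mean shift: \<open>s\<close> may be followed by either symbol,
  \<open>1 - s\<close> only by \<open>s\<close>.\<close>

definition golden_mean :: "mat01 \<Rightarrow> nat \<Rightarrow> bool" where
  "golden_mean Q s \<longleftrightarrow> s \<in> {0,1} \<and> Q s s = 1 \<and> Q s (1 - s) = 1 \<and> Q (1 - s) s = 1 \<and> Q (1 - s) (1 - s) \<noteq> 1"

lemma golden_mean_matD: "golden_mean matD 0"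
  by (simp add: golden_mean_def matD_def mat2_def)

lemma golden_mean_matF: "golden_mean matF 1"
  by (simp add: golden_mean_def matF_def mat2_def)

context
  fixes Q :: mat01 and s :: nat
  assumes golden: "golden_mean Q s"
begin

lemma golden_mean_symbol: "s \<in> {0,1}"
  using golden by (simp add: golden_mean_def)

lemma card_rooted_free_Suc: "card (rooted_blocks Q (Suc n) s) = card (right_blocks Q n) ^ 2"
proof -
  have "{R \<in> right_blocks Q n. Q s (R []) = 1} = right_blocks Q n"
    using golden right_blocks_root by (fastforce simp: golden_mean_def)
  then show ?thesis
    using card_rooted_blocks_Suc[OF golden_mean_symbol] by (simp add: power2_eq_square)
qed

lemma card_rooted_constrained_Suc:
  "card (rooted_blocks Q (Suc n) (1 - s)) = card (right_blocks Q n) * card (rooted_blocks Q n s)"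
proof -
  have "{R \<in> right_blocks Q n. Q (1 - s) (R []) = 1} = rooted_blocks Q n s"
    using golden right_blocks_root by (fastforce simp: golden_mean_def rooted_blocks_def)
  moreover have "1 - s \<in> {0,1}"
    using golden_mean_symbol by auto
  ultimately show ?thesis
    using card_rooted_blocks_Suc by simp
qed

lemma card_right_blocks_fib_ratio:
  "card (right_blocks Q n) * fib (n + 2) = fib (n + 3) * card (rooted_blocks Q n s)"
proof (induction n)
  case 0
  have "1 - s \<in> {0,1}"
    using golden_mean_symbol by auto
  then show ?case
    using golden_mean_symbol card_right_blocks[OF golden_mean_symbol, of Q 0]
    by (simp add: card_rooted_blocks_0 numeral_eq_Suc)
next
  case (Suc n)
  let ?V = "card (right_blocks Q n)" and ?a = "card (rooted_blocks Q n s)"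
  have "card (right_blocks Q (Suc n)) = ?V * (?V + ?a)"
    unfolding card_right_blocks[OF golden_mean_symbol, of Q "Suc n"]
      card_rooted_free_Suc card_rooted_constrained_Suc
    by (simp add: power2_eq_square algebra_simps)
  then have "card (right_blocks Q (Suc n)) * fib (Suc n + 2) = ?V * (?V * fib (n + 3) + ?V * fib (n + 2))"
    using Suc.IH by (simp add: algebra_simps numeral_eq_Suc del: fib2)
  also have "\<dots> = fib (Suc n + 3) * ?V ^ 2"
  proof -
    have "fib (n + 4) = fib (n + 3) + fib (n + 2)"
      by (simp add: numeral_eq_Suc)
    then show ?thesis
      by (simp add: power2_eq_square algebra_simps)
  qed
  finally show ?case
    unfolding card_rooted_free_Suc .
qed

lemma card_right_blocks_Suc:
  "card (right_blocks Q (Suc n)) * fib (n + 3) = fib (n + 4) * card (right_blocks Q n) ^ 2"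
proof -
  have "Suc n + 2 = n + 3" "Suc n + 3 = n + 4"
    by simp_all
  then show ?thesis
    using card_right_blocks_fib_ratio[of "Suc n"] card_rooted_free_Suc[of n] by metis
qed

end

definition fib_tree_product :: "nat \<Rightarrow> nat" where
  "fib_tree_product n = fib (n + 3) * fib (n + 2) * (\<Prod>l=3..n+1. fib l ^ (2 ^ (n + 2 - l)))"

lemma fib_tree_product_Suc:
  "fib_tree_product (Suc n) * fib (n + 3) = fib (n + 4) * fib_tree_product n ^ 2"
proof -
  define P where "P n = (\<Prod>l=3..n+1. fib l ^ (2 ^ (n + 2 - l)))" for n
  have "P (Suc n) = fib (n + 2) ^ 2 * P n ^ 2"
  proof (cases n)
    case 0
    then show ?thesis by (simp add: P_def)
  next
    case (Suc k)
    have ivl: "{3..Suc n + 1} = insert (n + 2) {3..n + 1}"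
      using Suc by auto
    have "P (Suc n) = (\<Prod>l\<in>insert (n + 2) {3..n + 1}. fib l ^ (2 ^ (n + 3 - l)))"
      unfolding P_def ivl by (simp add: numeral_eq_Suc)
    also have "\<dots> = fib (n + 2) ^ 2 * (\<Prod>l=3..n+1. fib l ^ (2 ^ (n + 3 - l)))"
      by (subst prod.insert) auto
    also have "(\<Prod>l=3..n+1. fib l ^ (2 ^ (n + 3 - l))) = P n ^ 2"
      unfolding P_def prod_power_distrib
    proof (rule prod.cong)
      fix l assume "l \<in> {3..n + 1}"
      then have "n + 3 - l = Suc (n + 2 - l)"
        by auto
      then show "fib l ^ 2 ^ (n + 3 - l) = (fib l ^ 2 ^ (n + 2 - l))\<^sup>2"
        by (simp add: mult.commute flip: power_mult)
    qed simp
    finally show ?thesis .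
  qed
  then show ?thesis
    unfolding fib_tree_product_def P_def[symmetric]
    by (simp add: power2_eq_square algebra_simps numeral_eq_Suc del: fib2)
qed

lemma fib_tree_product_pos: "fib_tree_product n > 0"
  by (simp add: fib_tree_product_def fib_neq_0_nat)

lemma pcount_golden_mean:
  assumes "golden_mean Q s"
  shows "pcount matA Q n = fib_tree_product n"
proof -
  have "pcount matA Q n = card (right_blocks Q n)"
    unfolding pcount_def using assms
    by (subst blocks_matA_eq_right_blocks[of s]) (auto simp: golden_mean_def)
  also have "\<dots> = fib_tree_product n"
  proof (induction n)
    case 0
    show ?case
      using card_right_blocks_fib_ratio[OF assms, of 0] card_rooted_blocks_0 golden_mean_symbol[OF assms]
      by (simp add: fib_tree_product_def)
  next
    case (Suc n)
    have "card (right_blocks Q (Suc n)) * fib (n + 3) = fib_tree_product (Suc n) * fib (n + 3)"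
      using card_right_blocks_Suc[OF assms, of n] fib_tree_product_Suc[of n] Suc.IH by simp
    moreover have "fib (n + 3) > 0"
      by (simp add: fib_neq_0_nat)
    ultimately show ?case
      by simp
  qed
  finally show ?thesis .
qed

lemma fib_Suc_le_power: "real (fib (m + 1)) \<le> (5 / 3) ^ m"
proof (induction m rule: fib.induct)
  case (3 n)
  have "real (fib (Suc (Suc n) + 1)) = real (fib (Suc n + 1)) + real (fib (n + 1))"
    by simp
  also have "\<dots> \<le> (5 / 3) ^ Suc n + (5 / 3) ^ n"
    using "3.IH" by (intro add_mono)
  also have "\<dots> \<le> (5 / 3) ^ Suc (Suc n)"
    by simp
  finally show ?case .
qed simp_all

definition entropy_term :: "nat \<Rightarrow> real" where
  "entropy_term m = ln (real (fib (m + 1))) / 2 ^ m"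

lemma entropy_term_nonneg: "0 \<le> entropy_term m"
  using fib_neq_0_nat[of "m + 1"] by (simp add: entropy_term_def)

lemma entropy_term_le: "entropy_term m \<le> (5 / 6) ^ m"
proof -
  have "ln (real (fib (m + 1))) \<le> real (fib (m + 1))"
    using fib_neq_0_nat[of "m + 1"] ln_le_minus_one[of "real (fib (m + 1))"] by simp
  also have "\<dots> \<le> (5 / 3) ^ m"
    by (rule fib_Suc_le_power)
  finally have "entropy_term m \<le> (5 / 3) ^ m / 2 ^ m"
    unfolding entropy_term_def by (simp add: divide_right_mono)
  also have "\<dots> = (5 / 6) ^ m"
    by (simp add: power_divide flip: power_mult_distrib)
  finally show ?thesis .
qed

lemma summable_entropy_term: "summable entropy_term"
  by (rule summable_comparison_test[OF _ summable_geometric[of "5 / 6 :: real"]])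
    (use entropy_term_nonneg entropy_term_le in auto)

text \<open>The two leading Fibonacci factors of \<open>fib_tree_product n\<close> account for the terms
  \<open>n + 1\<close> and \<open>n + 2\<close>, the latter twice.\<close>

lemma ln_fib_tree_product:
  "ln (real (fib_tree_product n)) = 2 ^ (n + 1) * ((\<Sum>m<n + 3. entropy_term m) + entropy_term (n + 2))"
proof (induction n)
  case 0
  then show ?case
    by (simp add: fib_tree_product_def entropy_term_def eval_nat_numeral)
next
  case (Suc n)
  let ?G = "\<lambda>n. real (fib_tree_product n)" and ?lf = "\<lambda>k. ln (real (fib k))"
  have "ln (?G (Suc n) * real (fib (n + 3))) = ln (real (fib (n + 4)) * ?G n ^ 2)"
    using fib_tree_product_Suc[of n] by (metis of_nat_mult of_nat_power)
  then have "ln (?G (Suc n)) + ?lf (n + 3) = ?lf (n + 4) + 2 * ln (?G n)"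
    using fib_tree_product_pos fib_neq_0_nat[of "n + 3"] fib_neq_0_nat[of "n + 4"]
    by (simp add: ln_mult ln_realpow)
  moreover have "2 ^ (n + 1) * entropy_term (n + 2) = ?lf (n + 3) / 2"
    and "2 ^ (n + 2) * entropy_term (n + 3) = ?lf (n + 4) / 2"
    by (simp_all add: entropy_term_def numeral_eq_Suc del: fib2)
  moreover have "(\<Sum>m<n + 4. entropy_term m) = (\<Sum>m<n + 3. entropy_term m) + entropy_term (n + 3)"
    by (simp add: numeral_eq_Suc)
  moreover have "Suc n + 1 = n + 2" "Suc n + 2 = n + 3" "Suc n + 3 = n + 4"
    by simp_all
  ultimately show ?case
    using Suc.IH by (simp only:) (simp add: algebra_simps)
qed

lemma sum_powers_of_two: "(\<Sum>i\<le>n. (2::real) ^ i) = 2 ^ (n + 1) - 1"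
  by (induction n) simp_all

lemma hPS_seq_tendsto:
  assumes "\<And>n. pcount P Q n = fib_tree_product n"
  shows "hPS_seq P Q \<longlonglongrightarrow> suminf entropy_term"
proof -
  define r where "r n = 1 / (1 - (1 / 2 :: real) ^ Suc n)" for n
  have "hPS_seq P Q n = ((\<Sum>m<n + 3. entropy_term m) + entropy_term (n + 2)) * r n" for n
  proof -
    have "(1 / 2 :: real) ^ Suc n = 1 / 2 ^ (n + 1)"
      by (simp add: power_divide)
    moreover have "(2::real) ^ (n + 1) > 1"
      by (rule one_less_power) auto
    ultimately show ?thesis
      unfolding hPS_seq_def assms ln_fib_tree_product sum_powers_of_two r_def
      by (simp add: field_simps)
  qed
  moreover have "(\<lambda>n. \<Sum>m<n + 3. entropy_term m) \<longlonglongrightarrow> suminf entropy_term"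
    using LIMSEQ_ignore_initial_segment[OF summable_LIMSEQ[OF summable_entropy_term]] .
  moreover have "(\<lambda>n. entropy_term (n + 2)) \<longlonglongrightarrow> 0"
    using LIMSEQ_ignore_initial_segment[OF summable_LIMSEQ_zero[OF summable_entropy_term]] .
  moreover have "r \<longlonglongrightarrow> 1 / (1 - 0)"
    unfolding r_def
    by (intro tendsto_intros LIMSEQ_Suc[OF LIMSEQ_power_zero]) auto
  ultimately have "(\<lambda>n. hPS_seq P Q n) \<longlonglongrightarrow> (suminf entropy_term + 0) * (1 / (1 - 0))"
    by (simp only:) (intro tendsto_intros)
  then show ?thesis
    by simp
qed

theorem mainTheorem13:
  shows "summable (\<lambda>n. if n \<ge> 2 then ln (real (fib (n + 1))) / 2 ^ n else 0)
    \<and> hPS_seq matA matD \<longlonglongrightarrow> (\<Sum>n. if n \<ge> 2 then ln (real (fib (n + 1))) / 2 ^ n else 0)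
    \<and> hPS_seq matA matF \<longlonglongrightarrow> (\<Sum>n. if n \<ge> 2 then ln (real (fib (n + 1))) / 2 ^ n else 0)
    \<and> (\<forall>n\<ge>3. pcount matA matD n =
          fib (n + 3) * fib (n + 2) * (\<Prod>l=3..n+1. fib l ^ (2 ^ (n + 2 - l))))"
proof -
  have summand: "(\<lambda>n. if n \<ge> 2 then ln (real (fib (n + 1))) / 2 ^ n else 0) = entropy_term"
  proof
    fix n :: nat
    show "(if n \<ge> 2 then ln (real (fib (n + 1))) / 2 ^ n else 0) = entropy_term n"
      by (cases "n \<ge> 2") (auto simp: entropy_term_def not_le less_2_cases_iff)
  qed
  have pcount_D: "pcount matA matD n = fib_tree_product n" for n
    using pcount_golden_mean[OF golden_mean_matD] .
  have pcount_F: "pcount matA matF n = fib_tree_product n" for n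
    using pcount_golden_mean[OF golden_mean_matF] .
  show ?thesis
    unfolding summand
    using summable_entropy_term hPS_seq_tendsto[OF pcount_D] hPS_seq_tendsto[OF pcount_F] pcount_D
    by (simp add: fib_tree_product_def)
qed

end
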